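(* There is a constant $C>0$ (independent of $N$ and $k$) such that for every $k\in\mathbb{Z}^2$, $$\hbar^2\sum_{p\in L_k}\lambda_{k,p}^{-1}\le C\log(N),$$ where $L_k=B_{\mathrm F}^c\cap(B_{\mathrm F}+k)$ and $\lambda_{k,p}=\frac12\hbar^2(|p|^2-|p-k|^2)$.
   Context: $N=|B_{\mathrm F}|$ with $B_{\mathrm F}=\{k\in\mathbb{Z}^2:|k|<k_{\mathrm F}\}$ for $k_{\mathrm F}>0$ with $k_{\mathrm F}^2=\frac12(\inf_{p\notin B_{\mathrm F}}|p|^2+\sup_{q\in B_{\mathrm F}}|q|^2)$; $B_{\mathrm F}^c=\mathbb{Z}^2\setminus B_{\mathrm F}$; $\hbar=N^{-1/2}$. (For $k=0$, $L_k=\emptyset$.) *)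

theory Defs
  imports Complex_Main
begin

definition sqnorm :: "int \<times> int \<Rightarrow> real" where
  "sqnorm p = real_of_int ((fst p)^2 + (snd p)^2)"

definition vdiff :: "int \<times> int \<Rightarrow> int \<times> int \<Rightarrow> int \<times> int" where
  "vdiff p q = (fst p - fst q, snd p - snd q)"

definition fermi_ball :: "real \<Rightarrow> (int \<times> int) set" where
  "fermi_ball kF = {k. sqrt (sqnorm k) < kF}"

definition admissible_kF :: "real \<Rightarrow> bool" where
  "admissible_kF kF \<longleftrightarrow> kF > 0 \<and>
     kF^2 = (Inf (sqnorm ` (UNIV - fermi_ball kF)) + Sup (sqnorm ` fermi_ball kF)) / 2"

definition Npart :: "real \<Rightarrow> nat" where
  "Npart kF = card (fermi_ball kF)"

definition hbar :: "real \<Rightarrow> real" where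
  "hbar kF = 1 / sqrt (real (Npart kF))"

definition Lset :: "real \<Rightarrow> int \<times> int \<Rightarrow> (int \<times> int) set" where
  "Lset kF k = {p. p \<notin> fermi_ball kF \<and> vdiff p k \<in> fermi_ball kF}"

definition lam :: "real \<Rightarrow> int \<times> int \<Rightarrow> int \<times> int \<Rightarrow> real" where
  "lam kF k p = (1/2) * (hbar kF)^2 * (sqnorm p - sqnorm (vdiff p k))"

end

theory Submission
  imports Defs "HOL-Analysis.Harmonic_Numbers"
begin

(* Put Q = kF^2 and k = (a, b). Then L_k is the shell {p. Q <= |p|^2 and |p - k|^2 < Q}, and
   2 lambda_{k,p} / hbar^2 = |p|^2 - |p - k|^2 = 2 p.k - |k|^2 is a positive integer g(p) there,
   so hbar^2 sum 1/lambda = 2 sum 1/g. The core is that at most 28 d points of the shell have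
   g(p) <= d, uniformly in Q and k; Abel summation against 1/(d(d+1)) then gives
   sum 1/g <= 28 ln N + |L_k|/N, and |L_k| <= N.

   For the count: p lies outside the disc |q|^2 < Q and p - k inside, so one of the steps
   p -> p - (0, b) -> p - (a, b) crosses the circle, and swapping coordinates reduces the
   vertical case to the horizontal one. In a row, the points whose horizontal step crosses form an
   interval of length < |a| on which g moves by 2a per lattice step, so there are at most
   min(|a|, d/(2|a|) + 1) of them. Points with g <= d lie in an annulus of width d and a strip of
   width d/|k|; on either side of the line R k the Lagrange identity
   |k|^2 |p - q|^2 = (k.(p - q))^2 + (k x (p - q))^2 bounds their distance by d/|a| + 2 sqrt d,
   which bounds the number of rows. *)

definition gap :: "int \<times> int \<Rightarrow> int \<times> int \<Rightarrow> int" where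
  "gap k p = 2 * (fst k * fst p + snd k * snd p) - ((fst k)\<^sup>2 + (snd k)\<^sup>2)"

definition cross :: "int \<times> int \<Rightarrow> int \<times> int \<Rightarrow> int" where
  "cross k p = fst k * snd p - snd k * fst p"

definition shell :: "real \<Rightarrow> int \<times> int \<Rightarrow> (int \<times> int) set" where
  "shell Q k = {p. Q \<le> sqnorm p \<and> sqnorm (vdiff p k) < Q}"

definition row_crossing :: "real \<Rightarrow> int \<times> int \<Rightarrow> int \<Rightarrow> (int \<times> int) set" where
  "row_crossing Q k c =
     {p \<in> shell Q k. Q \<le> sqnorm (fst p, snd p - c) \<and> sqnorm (fst p - fst k, snd p - c) < Q}"

lemma sqnorm_diff_sqnorm_vdiff: "sqnorm p - sqnorm (vdiff p k) = of_int (gap k p)"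
  by (simp add: sqnorm_def vdiff_def gap_def power2_eq_square algebra_simps)

lemma gap_pos: "p \<in> shell Q k \<Longrightarrow> 0 < gap k p"
  using sqnorm_diff_sqnorm_vdiff[of p k] by (simp add: shell_def)

lemma sqnorm_lt_shell: "p \<in> shell Q k \<Longrightarrow> sqnorm p < Q + of_int (gap k p)"
  using sqnorm_diff_sqnorm_vdiff[of p k] by (simp add: shell_def)

lemma abs_le_square_int: "\<bar>z\<bar> \<le> (z::int)\<^sup>2"
proof (cases "z = 0")
  case False
  then have "\<bar>z\<bar> * 1 \<le> \<bar>z\<bar> * \<bar>z\<bar>" by (intro mult_left_mono) auto
  then show ?thesis by (simp add: power2_eq_square)
qed simp

lemma finite_sqnorm_less: "finite {q. sqnorm q < Q}"
proof -
  have "{q. sqnorm q < Q} \<subseteq> {-\<lceil>Q\<rceil>..\<lceil>Q\<rceil>} \<times> {-\<lceil>Q\<rceil>..\<lceil>Q\<rceil>}"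
  proof clarsimp
    fix x y :: int
    assume "sqnorm (x, y) < Q"
    then have "real_of_int (x\<^sup>2 + y\<^sup>2) < Q"
      by (simp only: sqnorm_def fst_conv snd_conv)
    moreover have "\<bar>x\<bar> \<le> x\<^sup>2 + y\<^sup>2" "\<bar>y\<bar> \<le> x\<^sup>2 + y\<^sup>2"
      using abs_le_square_int[of x] abs_le_square_int[of y] zero_le_power2[of x] zero_le_power2[of y]
      by linarith+
    ultimately have "real_of_int \<bar>x\<bar> < Q" "real_of_int \<bar>y\<bar> < Q"
      by (smt (verit) of_int_le_iff)+
    then show "- \<lceil>Q\<rceil> \<le> x \<and> x \<le> \<lceil>Q\<rceil> \<and> - \<lceil>Q\<rceil> \<le> y \<and> y \<le> \<lceil>Q\<rceil>"
      by linarith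
  qed
  then show ?thesis by (rule finite_subset) simp
qed

lemma inj_vdiff: "inj (\<lambda>p. vdiff p k)"
  by (auto simp: inj_def vdiff_def prod_eq_iff)

lemma finite_shell: "finite (shell Q k)"
  by (rule inj_on_finite[OF inj_on_subset[OF inj_vdiff[of k]] _ finite_sqnorm_less[of Q]])
     (auto simp: shell_def)

lemma card_shell_le: "card (shell Q k) \<le> card {q. sqnorm q < Q}"
  by (rule card_inj_on_le[OF inj_on_subset[OF inj_vdiff[of k]] _ finite_sqnorm_less[of Q]])
     (auto simp: shell_def)

lemma card_int_set_le_diameter:
  fixes X :: "int set" and r :: real
  assumes "0 \<le> r" and diam: "\<And>x y. x \<in> X \<Longrightarrow> y \<in> X \<Longrightarrow> of_int (y - x) \<le> r"
  shows "real (card X) \<le> r + 1"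
proof (cases "X = {}")
  case False
  then obtain x where "x \<in> X" by blast
  have "X \<subseteq> {x - \<lfloor>r\<rfloor>..x + \<lfloor>r\<rfloor>}"
  proof
    fix y assume "y \<in> X"
    have "y - x \<le> \<lfloor>r\<rfloor>" "x - y \<le> \<lfloor>r\<rfloor>"
      using diam[OF \<open>x \<in> X\<close> \<open>y \<in> X\<close>] diam[OF \<open>y \<in> X\<close> \<open>x \<in> X\<close>]
      by (simp_all only: le_floor_iff)
    then show "y \<in> {x - \<lfloor>r\<rfloor>..x + \<lfloor>r\<rfloor>}" by simp
  qed
  then have fin: "finite X" by (rule finite_subset) simp
  define m where "m = Min X"
  have "m \<in> X" using fin False by (simp add: m_def)
  have "X \<subseteq> {m..m + \<lfloor>r\<rfloor>}"
  proof
    fix y assume "y \<in> X"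
    have "y - m \<le> \<lfloor>r\<rfloor>"
      using diam[OF \<open>m \<in> X\<close> \<open>y \<in> X\<close>] by (simp only: le_floor_iff)
    moreover have "m \<le> y" using \<open>y \<in> X\<close> fin by (simp add: m_def)
    ultimately show "y \<in> {m..m + \<lfloor>r\<rfloor>}" by simp
  qed
  then have "card X \<le> card {m..m + \<lfloor>r\<rfloor>}"
    by (rule card_mono[rotated]) simp
  also have "\<dots> = nat (\<lfloor>r\<rfloor> + 1)"
    by simp
  finally have "real (card X) \<le> of_int (\<lfloor>r\<rfloor> + 1)"
    using \<open>0 \<le> r\<close> by linarith
  then show ?thesis
    using of_int_floor_le[of r] by linarith
qed (use \<open>0 \<le> r\<close> in simp)

lemma card_le_rows_times_row_length:
  fixes P :: "(int \<times> int) set" and r s :: real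
  assumes "finite P" "0 \<le> r" "0 \<le> s"
    and rows: "\<And>p q. p \<in> P \<Longrightarrow> q \<in> P \<Longrightarrow> of_int (snd q - snd p) \<le> r"
    and row_length: "\<And>p q. p \<in> P \<Longrightarrow> q \<in> P \<Longrightarrow> snd p = snd q \<Longrightarrow> of_int (fst q - fst p) \<le> s"
  shows "real (card P) \<le> (r + 1) * (s + 1)"
proof -
  have row: "real (card {p \<in> P. snd p = y}) \<le> s + 1" for y
  proof -
    have "inj_on fst {p \<in> P. snd p = y}"
      by (auto simp: inj_on_def prod_eq_iff)
    then have "card {p \<in> P. snd p = y} = card (fst ` {p \<in> P. snd p = y})"
      by (simp add: card_image)
    also have "real \<dots> \<le> s + 1"
      by (rule card_int_set_le_diameter) (use \<open>0 \<le> s\<close> row_length in auto)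
    finally show ?thesis .
  qed
  have "card P = (\<Sum>y\<in>snd ` P. card {p \<in> P. snd p = y})"
    unfolding card_eq_sum by (rule sum.image_gen[OF \<open>finite P\<close>])
  then have "real (card P) = (\<Sum>y\<in>snd ` P. real (card {p \<in> P. snd p = y}))"
    by simp
  also have "\<dots> \<le> (\<Sum>y\<in>snd ` P. s + 1)"
    by (rule sum_mono) (rule row)
  also have "\<dots> = real (card (snd ` P)) * (s + 1)"
    by simp
  also have "\<dots> \<le> (r + 1) * (s + 1)"
  proof (rule mult_right_mono)
    show "real (card (snd ` P)) \<le> r + 1"
      by (rule card_int_set_le_diameter) (use \<open>0 \<le> r\<close> rows in auto)
  qed (use \<open>0 \<le> s\<close> in simp)
  finally show ?thesis .
qed

lemma crossing_diff_lt_shift: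
  fixes x y a :: int and m :: real
  assumes "m \<le> of_int (x\<^sup>2)" "m \<le> of_int (y\<^sup>2)" "of_int ((x - a)\<^sup>2) < m" "of_int ((y - a)\<^sup>2) < m"
  shows "y - x < \<bar>a\<bar>"
proof -
  have x: "(x - a)\<^sup>2 < x\<^sup>2" "(y - a)\<^sup>2 < x\<^sup>2" and y: "(y - a)\<^sup>2 < y\<^sup>2" "(x - a)\<^sup>2 < y\<^sup>2"
    using assms by linarith+
  consider "0 < a" | "a < 0" | "a = 0" by linarith
  then show ?thesis
  proof cases
    case 1
    have "0 < a * (2 * x - a)"
      using x(1) by (simp add: power2_eq_square algebra_simps)
    with 1 have "0 \<le> x"
      by (simp add: zero_less_mult_iff)
    with x(2) have "y - a < x"
      by (rule power2_less_imp_less)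
    with 1 show ?thesis by simp
  next
    case 2
    have "0 < a * (2 * y - a)"
      using y(1) by (simp add: power2_eq_square algebra_simps)
    with 2 have "0 \<le> - y"
      by (simp add: zero_less_mult_iff)
    moreover have "(a - x)\<^sup>2 < (- y)\<^sup>2"
      using y(2) by (simp add: power2_commute)
    ultimately have "a - x < - y"
      by (rule power2_less_imp_less[rotated])
    with 2 show ?thesis by simp
  qed (use x in simp)
qed

lemma same_side_spread:
  fixes a b x y x' y' d :: int
  defines "K \<equiv> a\<^sup>2 + b\<^sup>2"
  assumes gap: "1 \<le> 2 * (a * x + b * y) - K" "2 * (a * x + b * y) - K \<le> d"
      "1 \<le> 2 * (a * x' + b * y') - K" "2 * (a * x' + b * y') - K \<le> d"
    and norm: "\<bar>(x\<^sup>2 + y\<^sup>2) - (x'\<^sup>2 + y'\<^sup>2)\<bar> \<le> d"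
    and side: "0 \<le> a * y - b * x \<longleftrightarrow> 0 \<le> a * y' - b * x'"
  shows "4 * K * ((x - x')\<^sup>2 + (y - y')\<^sup>2) \<le> 3 * d\<^sup>2 + 6 * K * d"
proof -
  define u u' v v' where "u = a * x + b * y" and "u' = a * x' + b * y'"
    and "v = a * y - b * x" and "v' = a * y' - b * x'"
  have "1 \<le> d" "0 \<le> K"
    using gap by (simp_all add: K_def)
  have lagrange: "K * ((x - x')\<^sup>2 + (y - y')\<^sup>2) = (u - u')\<^sup>2 + (v - v')\<^sup>2"
    and v_sq_diff: "v\<^sup>2 - v'\<^sup>2 = K * ((x\<^sup>2 + y\<^sup>2) - (x'\<^sup>2 + y'\<^sup>2)) - (u - u') * (u + u')"
    by (simp_all add: K_def u_def u'_def v_def v'_def power2_eq_square algebra_simps)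
  have du: "\<bar>2 * (u - u')\<bar> \<le> d"
    using gap by (simp add: u_def u'_def abs_le_iff)
  then have "(2 * (u - u'))\<^sup>2 \<le> d\<^sup>2"
    using power2_le_iff_abs_le[of d "2 * (u - u')"] \<open>1 \<le> d\<close> by simp
  then have du_sq: "4 * (u - u')\<^sup>2 \<le> d\<^sup>2"
    by (simp only: power_mult_distrib) simp
  have "\<bar>v - v'\<bar> \<le> \<bar>v + v'\<bar>"
    using side by (simp add: v_def v'_def) linarith
  then have dv_sq: "(v - v')\<^sup>2 \<le> \<bar>v\<^sup>2 - v'\<^sup>2\<bar>"
  proof -
    assume "\<bar>v - v'\<bar> \<le> \<bar>v + v'\<bar>"
    then have "\<bar>v - v'\<bar> * \<bar>v - v'\<bar> \<le> \<bar>v - v'\<bar> * \<bar>v + v'\<bar>"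
      by (rule mult_left_mono) simp
    also have "\<dots> = \<bar>v\<^sup>2 - v'\<^sup>2\<bar>"
      by (simp add: abs_mult[symmetric] power2_eq_square algebra_simps)
    finally show ?thesis
      by (simp add: power2_eq_square)
  qed
  have "\<bar>K * ((x\<^sup>2 + y\<^sup>2) - (x'\<^sup>2 + y'\<^sup>2))\<bar> \<le> K * d"
    using norm \<open>0 \<le> K\<close> by (simp add: abs_mult mult_left_mono)
  moreover have "4 * \<bar>(u - u') * (u + u')\<bar> \<le> d * (2 * K + 2 * d)"
  proof -
    have "\<bar>2 * u + 2 * u'\<bar> \<le> 2 * K + 2 * d"
      using gap \<open>0 \<le> K\<close> by (simp add: u_def u'_def abs_le_iff)
    then have "\<bar>2 * (u - u')\<bar> * \<bar>2 * u + 2 * u'\<bar> \<le> d * (2 * K + 2 * d)"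
      using du by (intro mult_mono) auto
    moreover have "2 * (u - u') * (2 * u + 2 * u') = 4 * ((u - u') * (u + u'))"
      by (simp add: algebra_simps)
    then have "\<bar>2 * (u - u')\<bar> * \<bar>2 * u + 2 * u'\<bar> = 4 * \<bar>(u - u') * (u + u')\<bar>"
      by (simp only: abs_mult[symmetric])
    ultimately show ?thesis
      by simp
  qed
  moreover have "\<bar>v\<^sup>2 - v'\<^sup>2\<bar> \<le> \<bar>K * ((x\<^sup>2 + y\<^sup>2) - (x'\<^sup>2 + y'\<^sup>2))\<bar> + \<bar>(u - u') * (u + u')\<bar>"
    unfolding v_sq_diff by (rule abs_triangle_ineq4)
  ultimately have "4 * (v - v')\<^sup>2 \<le> 4 * (K * d) + d * (2 * K + 2 * d)"
    using dv_sq by linarith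
  with du_sq have "4 * ((u - u')\<^sup>2 + (v - v')\<^sup>2) \<le> 3 * d\<^sup>2 + 6 * K * d"
    by (simp add: power2_eq_square algebra_simps)
  then show ?thesis
    by (simp add: lagrange mult.assoc)
qed

lemma spread_imp_le:
  fixes t A D K :: real
  assumes "0 < A" "A\<^sup>2 \<le> K" "0 \<le> D" "4 * K * t\<^sup>2 \<le> 3 * D\<^sup>2 + 6 * K * D"
  shows "t \<le> D / A + 2 * sqrt D"
proof -
  have "0 < K"
    using zero_less_power[OF \<open>0 < A\<close>, of 2] \<open>A\<^sup>2 \<le> K\<close> by linarith
  then have "t\<^sup>2 \<le> (3 * D\<^sup>2 + 6 * K * D) / (4 * K)"
    using assms(4) by (simp add: pos_le_divide_eq mult.commute)
  also have "\<dots> = 3 * D\<^sup>2 / (4 * K) + 3 * D / 2"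
    using \<open>0 < K\<close> by (simp add: field_simps)
  finally have "t\<^sup>2 \<le> 3 * D\<^sup>2 / (4 * K) + 3 * D / 2" .
  moreover have "3 * D\<^sup>2 / (4 * K) \<le> 4 * D\<^sup>2 / (4 * A\<^sup>2)"
    by (rule frac_le) (use assms in auto)
  moreover have "4 * D\<^sup>2 / (4 * A\<^sup>2) + 4 * D \<le> (D / A + 2 * sqrt D)\<^sup>2"
  proof -
    have "(D / A + 2 * sqrt D)\<^sup>2 = (D / A)\<^sup>2 + 4 * (D / A * sqrt D) + 4 * D"
      using assms by (simp add: power2_sum power_mult_distrib)
    moreover have "0 \<le> D / A * sqrt D"
      using assms by simp
    ultimately show ?thesis
      by (simp add: power_divide)
  qed
  ultimately have "t\<^sup>2 \<le> (D / A + 2 * sqrt D)\<^sup>2"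
    using \<open>0 \<le> D\<close> by linarith
  moreover have "0 \<le> D / A + 2 * sqrt D"
    using assms by simp
  ultimately show ?thesis
    by (rule power2_le_imp_le)
qed

lemma shell_same_side_snd_diff:
  assumes p: "p \<in> shell Q k" and q: "q \<in> shell Q k"
    and gap_le: "gap k p \<le> int d" "gap k q \<le> int d" and "fst k \<noteq> 0"
    and side: "0 \<le> cross k p \<longleftrightarrow> 0 \<le> cross k q"
  shows "of_int (snd q - snd p) \<le> real d / of_int \<bar>fst k\<bar> + 2 * sqrt (real d)"
proof -
  obtain a b x y x' y' where k: "k = (a, b)" and pq: "p = (x, y)" "q = (x', y')"
    by (cases k, cases p, cases q)
  define K where "K = a\<^sup>2 + b\<^sup>2"
  have "0 \<le> K"
    by (simp add: K_def)
  have "\<bar>sqnorm p - sqnorm q\<bar> < real d"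
    using sqnorm_lt_shell[OF p] sqnorm_lt_shell[OF q] p q gap_le by (auto simp: shell_def)
  then have "real_of_int \<bar>(x\<^sup>2 + y\<^sup>2) - (x'\<^sup>2 + y'\<^sup>2)\<bar> < real_of_int (int d)"
    by (simp add: sqnorm_def pq)
  then have "\<bar>(x\<^sup>2 + y\<^sup>2) - (x'\<^sup>2 + y'\<^sup>2)\<bar> \<le> int d"
    by (simp only: of_int_less_iff)
  then have spread: "4 * K * ((x - x')\<^sup>2 + (y - y')\<^sup>2) \<le> 3 * (int d)\<^sup>2 + 6 * K * int d"
    unfolding K_def
    using gap_pos[OF p] gap_pos[OF q] gap_le side
    by (intro same_side_spread) (auto simp: gap_def cross_def k pq)
  define t A D where "t = real_of_int (y' - y)" and "A = real_of_int \<bar>a\<bar>" and "D = real d"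
  have "0 < A" "A\<^sup>2 \<le> K" "0 \<le> D"
    using \<open>fst k \<noteq> 0\<close> by (simp_all add: A_def D_def K_def k)
  have "4 * K * (y - y')\<^sup>2 \<le> 4 * K * ((x - x')\<^sup>2 + (y - y')\<^sup>2)"
    using \<open>0 \<le> K\<close> by (intro mult_left_mono) auto
  with spread have "real_of_int (4 * K * (y - y')\<^sup>2) \<le> real_of_int (3 * (int d)\<^sup>2 + 6 * K * int d)"
    by (simp only: of_int_le_iff)
  then have "4 * of_int K * t\<^sup>2 \<le> 3 * D\<^sup>2 + 6 * of_int K * D"
    by (simp add: t_def D_def power2_commute)
  then have "t \<le> D / A + 2 * sqrt D"
    by (rule spread_imp_le[OF \<open>0 < A\<close> \<open>A\<^sup>2 \<le> K\<close> \<open>0 \<le> D\<close>])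
  then show ?thesis
    by (simp add: t_def A_def D_def pq k)
qed

lemma row_crossing_row_length:
  assumes p: "p \<in> row_crossing Q k c" and q: "q \<in> row_crossing Q k c" and "snd p = snd q"
    and gap_le: "gap k p \<le> int d" "gap k q \<le> int d" and "fst k \<noteq> 0"
  shows "of_int (fst q - fst p) \<le> min (of_int \<bar>fst k\<bar> - 1) (real d / (2 * of_int \<bar>fst k\<bar>))"
proof -
  obtain a b x x' y where k: "k = (a, b)" and pq: "p = (x, y)" "q = (x', y)"
    using \<open>snd p = snd q\<close> by (cases k, cases p, cases q) auto
  define m where "m = Q - of_int ((y - c)\<^sup>2)"
  have "m \<le> of_int (x\<^sup>2)" "m \<le> of_int (x'\<^sup>2)" "of_int ((x - a)\<^sup>2) < m" "of_int ((x' - a)\<^sup>2) < m"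
    using p q by (auto simp: row_crossing_def sqnorm_def m_def k pq)
  then have "x' - x < \<bar>a\<bar>"
    by (rule crossing_diff_lt_shift)
  then have "real_of_int (x' - x) \<le> real_of_int (\<bar>a\<bar> - 1)"
    by (simp only: of_int_le_iff)
  moreover have "gap k q - gap k p = 2 * a * (x' - x)"
    by (simp add: gap_def k pq algebra_simps)
  then have "2 * \<bar>a\<bar> * \<bar>x' - x\<bar> \<le> int d"
    using gap_le gap_pos[of p Q k] gap_pos[of q Q k] p q
    by (auto simp: row_crossing_def abs_mult)
  then have "2 * \<bar>a\<bar> * (x' - x) \<le> int d"
    using mult_left_mono[of "x' - x" "\<bar>x' - x\<bar>" "2 * \<bar>a\<bar>"] by linarith
  then have "real_of_int (2 * \<bar>a\<bar> * (x' - x)) \<le> real_of_int (int d)"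
    by (simp only: of_int_le_iff)
  then have "of_int (x' - x) \<le> real d / (2 * of_int \<bar>a\<bar>)"
    using \<open>fst k \<noteq> 0\<close> by (simp add: k pos_le_divide_eq mult_ac)
  ultimately show ?thesis
    by (simp add: k pq)
qed

lemma rows_times_row_length_le:
  fixes A D :: real
  assumes "1 \<le> A" "1 \<le> D"
  shows "(D / A + 2 * sqrt D + 1) * (min (A - 1) (D / (2 * A)) + 1) \<le> 7 * D"
proof -
  define m where "m = min (A - 1) (D / (2 * A)) + 1"
  have "1 \<le> sqrt D" "sqrt D * sqrt D = D"
    using assms by simp_all
  have "1 \<le> m" "m \<le> A"
    using assms by (simp_all add: m_def)
  have "m \<le> 2 * sqrt D"
  proof (cases "A \<le> sqrt D")
    case True
    then show ?thesis
      using \<open>m \<le> A\<close> \<open>1 \<le> sqrt D\<close> by linarith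
  next
    case False
    then have "D / (2 * A) \<le> D / (2 * sqrt D)"
      using assms by (intro divide_left_mono) auto
    also have "\<dots> = sqrt D / 2"
      using \<open>sqrt D * sqrt D = D\<close> \<open>1 \<le> sqrt D\<close> by (simp add: field_simps)
    finally have "m \<le> sqrt D / 2 + 1"
      unfolding m_def by linarith
    then show ?thesis
      using \<open>1 \<le> sqrt D\<close> by linarith
  qed
  have "(D / A + 2 * sqrt D + 1) * m = D / A * m + (2 * sqrt D + 1) * m"
    by (simp add: algebra_simps)
  also have "\<dots> \<le> D + 3 * sqrt D * (2 * sqrt D)"
  proof (rule add_mono)
    show "D / A * m \<le> D"
      using \<open>m \<le> A\<close> assms by (simp add: field_simps)
    show "(2 * sqrt D + 1) * m \<le> 3 * sqrt D * (2 * sqrt D)"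
      using \<open>m \<le> 2 * sqrt D\<close> \<open>1 \<le> m\<close> \<open>1 \<le> sqrt D\<close> by (intro mult_mono) auto
  qed
  also have "\<dots> = 7 * D"
    using \<open>sqrt D * sqrt D = D\<close> by (simp add: algebra_simps)
  finally show ?thesis
    by (simp only: m_def)
qed

lemma card_row_crossing_side_le:
  assumes "1 \<le> d"
  shows "card {p \<in> row_crossing Q k c. gap k p \<le> int d \<and> (0 \<le> cross k p) = side} \<le> 7 * d"
proof (cases "fst k = 0")
  case True
  then have "row_crossing Q k c = {}"
    by (auto simp: row_crossing_def)
  then show ?thesis by simp
next
  case False
  define A where "A = real_of_int \<bar>fst k\<bar>"
  define S where "S = {p \<in> row_crossing Q k c. gap k p \<le> int d \<and> (0 \<le> cross k p) = side}"
  have "1 \<le> A" "1 \<le> real d"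
    using False \<open>1 \<le> d\<close> by (simp_all add: A_def)
  have "real (card S) \<le> (d / A + 2 * sqrt d + 1) * (min (A - 1) (d / (2 * A)) + 1)"
  proof (rule card_le_rows_times_row_length)
    show "finite S"
      by (rule finite_subset[OF _ finite_shell]) (auto simp: S_def row_crossing_def)
    show "0 \<le> min (A - 1) (real d / (2 * A))"
      using \<open>1 \<le> A\<close> by simp
    show "0 \<le> real d / A + 2 * sqrt (real d)"
      using \<open>1 \<le> A\<close> by (intro add_nonneg_nonneg divide_nonneg_nonneg) auto
  next
    fix p q assume "p \<in> S" "q \<in> S"
    then show "of_int (snd q - snd p) \<le> real d / A + 2 * sqrt (real d)"
      unfolding A_def S_def using False
      by (intro shell_same_side_snd_diff[of p Q k q]) (auto simp: row_crossing_def)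
  next
    fix p q assume "p \<in> S" "q \<in> S" "snd p = snd q"
    then show "of_int (fst q - fst p) \<le> min (A - 1) (real d / (2 * A))"
      unfolding A_def S_def using False
      by (intro row_crossing_row_length[of p Q k c q]) auto
  qed
  also have "\<dots> \<le> 7 * real d"
    by (rule rows_times_row_length_le) fact+
  finally show ?thesis
    by (simp add: S_def)
qed

lemma card_row_crossing_le:
  assumes "1 \<le> d"
  shows "card {p \<in> row_crossing Q k c. gap k p \<le> int d} \<le> 14 * d"
proof -
  let ?S = "\<lambda>side. {p \<in> row_crossing Q k c. gap k p \<le> int d \<and> (0 \<le> cross k p) = side}"
  have "{p \<in> row_crossing Q k c. gap k p \<le> int d} = ?S True \<union> ?S False"
    by auto
  then have "card {p \<in> row_crossing Q k c. gap k p \<le> int d} \<le> card (?S True) + card (?S False)"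
    by (simp add: card_Un_le)
  also have "\<dots> \<le> 7 * d + 7 * d"
    using card_row_crossing_side_le[OF assms] by (intro add_mono)
  finally show ?thesis by simp
qed

lemma gap_swap: "gap (prod.swap k) p = gap k (prod.swap p)"
  by (simp add: gap_def algebra_simps)

lemma shell_swap: "p \<in> shell Q k \<Longrightarrow> prod.swap p \<in> shell Q (prod.swap k)"
  by (cases p, cases k) (simp add: shell_def vdiff_def sqnorm_def add.commute)

lemma shell_subset_row_crossings:
  "shell Q k \<subseteq> row_crossing Q k (snd k) \<union> prod.swap ` row_crossing Q (prod.swap k) 0"
proof
  fix p assume p: "p \<in> shell Q k"
  obtain a b x y where k: "k = (a, b)" and pq: "p = (x, y)"
    by (cases k, cases p)
  show "p \<in> row_crossing Q k (snd k) \<union> prod.swap ` row_crossing Q (prod.swap k) 0"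
  proof (cases "Q \<le> sqnorm (x, y - b)")
    case True
    then have "p \<in> row_crossing Q k (snd k)"
      using p by (simp add: row_crossing_def shell_def vdiff_def k pq)
    then show ?thesis ..
  next
    case False
    then have "prod.swap p \<in> row_crossing Q (prod.swap k) 0"
      using p shell_swap[OF p] by (simp add: row_crossing_def shell_def sqnorm_def k pq add.commute)
    then have "prod.swap (prod.swap p) \<in> prod.swap ` row_crossing Q (prod.swap k) 0"
      by (rule imageI)
    then show ?thesis by simp
  qed
qed

lemma card_shell_gap_le:
  assumes "1 \<le> d"
  shows "card {p \<in> shell Q k. gap k p \<le> int d} \<le> 28 * d"
proof -
  let ?R = "\<lambda>k c. {p \<in> row_crossing Q k c. gap k p \<le> int d}"
  have fin: "finite (?R k c)" for k c
    by (rule finite_subset[OF _ finite_shell]) (auto simp: row_crossing_def)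
  have "{p \<in> shell Q k. gap k p \<le> int d} \<subseteq> ?R k (snd k) \<union> prod.swap ` ?R (prod.swap k) 0"
  proof
    fix p assume "p \<in> {p \<in> shell Q k. gap k p \<le> int d}"
    then have p: "p \<in> shell Q k" "gap k p \<le> int d" by auto
    show "p \<in> ?R k (snd k) \<union> prod.swap ` ?R (prod.swap k) 0"
    proof (cases "p \<in> row_crossing Q k (snd k)")
      case False
      with shell_subset_row_crossings p(1) obtain q
        where "q \<in> row_crossing Q (prod.swap k) 0" "p = prod.swap q"
        by blast
      with p(2) show ?thesis
        by (auto simp: gap_swap)
    qed (use p in blast)
  qed
  then have "card {p \<in> shell Q k. gap k p \<le> int d} \<le> card (?R k (snd k) \<union> prod.swap ` ?R (prod.swap k) 0)"
    using fin by (intro card_mono) auto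
  also have "\<dots> \<le> card (?R k (snd k)) + card (prod.swap ` ?R (prod.swap k) 0)"
    by (rule card_Un_le)
  also have "\<dots> \<le> card (?R k (snd k)) + card (?R (prod.swap k) 0)"
    using card_image_le[OF fin] by (rule add_left_mono)
  also have "\<dots> \<le> 14 * d + 14 * d"
    using card_row_crossing_le[OF assms] by (intro add_mono)
  finally show ?thesis by simp
qed

lemma sum_inverse_telescope:
  assumes "1 \<le> D" "D \<le> M"
  shows "(\<Sum>d\<in>{D..<M}. 1 / (real d * (real d + 1))) = 1 / real D - 1 / real M"
proof -
  have "(\<Sum>d\<in>{D..<M}. 1 / (real d * (real d + 1))) = (\<Sum>d\<in>{D..<M}. (- 1 / real (Suc d)) - (- 1 / real d))"
    using assms by (intro sum.cong) (auto simp: field_simps)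
  also have "\<dots> = 1 / real D - 1 / real M"
    using sum_Suc_diff'[OF assms(2), of "\<lambda>d. - 1 / real d"] by simp
  finally show ?thesis .
qed

lemma inverse_le_sum_telescope:
  fixes D M :: nat
  assumes "1 \<le> D" "1 \<le> M"
  shows "1 / real D \<le> (\<Sum>d\<in>{1..<M}. if D \<le> d then 1 / (real d * (real d + 1)) else 0) + 1 / real M"
proof (cases "D \<le> M")
  case True
  have "(\<Sum>d\<in>{1..<M}. if D \<le> d then 1 / (real d * (real d + 1)) else 0)
      = (\<Sum>d\<in>{d \<in> {1..<M}. D \<le> d}. 1 / (real d * (real d + 1)))"
    by (rule sum.inter_filter[symmetric]) simp
  also have "{d \<in> {1..<M}. D \<le> d} = {D..<M}"
    using assms by auto
  finally show ?thesis
    using sum_inverse_telescope[OF assms(1) True] by simp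
next
  case False
  then have "1 / real D \<le> 1 / real M"
    using assms by (simp add: frac_le)
  moreover have "0 \<le> (\<Sum>d\<in>{1..<M}. if D \<le> d then 1 / (real d * (real d + 1)) else 0)"
    by (rule sum_nonneg) simp
  ultimately show ?thesis by linarith
qed

lemma sum_inverse_le_counting:
  fixes L :: "'a set" and D :: "'a \<Rightarrow> nat" and M :: nat
  assumes "finite L" "\<And>p. p \<in> L \<Longrightarrow> 1 \<le> D p" "1 \<le> M"
  shows "(\<Sum>p\<in>L. 1 / real (D p))
    \<le> (\<Sum>d\<in>{1..<M}. real (card {p \<in> L. D p \<le> d}) / (real d * (real d + 1))) + real (card L) / real M"
proof -
  have "(\<Sum>p\<in>L. 1 / real (D p))
      \<le> (\<Sum>p\<in>L. (\<Sum>d\<in>{1..<M}. if D p \<le> d then 1 / (real d * (real d + 1)) else 0) + 1 / real M)"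
    using assms by (intro sum_mono inverse_le_sum_telescope) auto
  also have "\<dots> = (\<Sum>d\<in>{1..<M}. \<Sum>p\<in>L. if D p \<le> d then 1 / (real d * (real d + 1)) else 0)
      + real (card L) / real M"
    by (simp add: sum.distrib sum.swap[of _ L])
  also have "(\<Sum>d\<in>{1..<M}. \<Sum>p\<in>L. if D p \<le> d then 1 / (real d * (real d + 1)) else 0)
      = (\<Sum>d\<in>{1..<M}. real (card {p \<in> L. D p \<le> d}) / (real d * (real d + 1)))"
    using \<open>finite L\<close> by (intro sum.cong) (simp_all add: sum.inter_filter[symmetric])
  finally show ?thesis .
qed

lemma sum_inverse_Suc_le_ln:
  assumes "1 \<le> M"
  shows "(\<Sum>d\<in>{1..<M}. 1 / (real d + 1)) \<le> ln (real M)"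
proof -
  have "(\<Sum>d\<in>{1..<M}. 1 / (real d + 1)) = harm M - 1"
    using assms
  proof (induction M rule: dec_induct)
    case base
    then show ?case by (simp add: harm_def)
  next
    case (step n)
    have "(\<Sum>d\<in>{1..<Suc n}. 1 / (real d + 1)) = (\<Sum>d\<in>{1..<n}. 1 / (real d + 1)) + 1 / (real n + 1)"
      using step.hyps(1) by (simp add: sum.atLeastLessThan_Suc)
    also have "\<dots> = harm (Suc n) - 1"
      using step.IH by (simp add: harm_Suc inverse_eq_divide add_ac)
    finally show ?case .
  qed
  also have "\<dots> \<le> ln (real M)"
    using euler_mascheroni_sequence_decreasing[of 1 M] assms by (simp add: harm_def)
  finally show ?thesis .
qed

lemma sum_inverse_le_ln:
  fixes L :: "'a set" and D :: "'a \<Rightarrow> nat" and M :: nat and c :: real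
  assumes "finite L" "\<And>p. p \<in> L \<Longrightarrow> 1 \<le> D p" "1 \<le> M"
    and count: "\<And>d. 1 \<le> d \<Longrightarrow> real (card {p \<in> L. D p \<le> d}) \<le> c * real d"
  shows "(\<Sum>p\<in>L. 1 / real (D p)) \<le> c * ln (real M) + real (card L) / real M"
proof -
  have "0 \<le> c"
    using count[of 1] by simp
  have "(\<Sum>d\<in>{1..<M}. real (card {p \<in> L. D p \<le> d}) / (real d * (real d + 1)))
      \<le> (\<Sum>d\<in>{1..<M}. c * real d / (real d * (real d + 1)))"
    using count by (intro sum_mono divide_right_mono) auto
  also have "\<dots> = c * (\<Sum>d\<in>{1..<M}. 1 / (real d + 1))"
    by (simp add: sum_distrib_left)
  also have "\<dots> \<le> c * ln (real M)"
    using sum_inverse_Suc_le_ln[OF \<open>1 \<le> M\<close>] \<open>0 \<le> c\<close> by (rule mult_left_mono)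
  moreover have "(\<Sum>p\<in>L. 1 / real (D p))
    \<le> (\<Sum>d\<in>{1..<M}. real (card {p \<in> L. D p \<le> d}) / (real d * (real d + 1))) + real (card L) / real M"
    by (rule sum_inverse_le_counting) (use assms in auto)
  ultimately show ?thesis
    by linarith
qed

lemma fermi_ball_eq:
  assumes "0 < kF"
  shows "fermi_ball kF = {p. sqnorm p < kF\<^sup>2}"
proof -
  have "sqrt s < kF \<longleftrightarrow> s < kF\<^sup>2" for s
    using real_sqrt_less_iff[of s "kF\<^sup>2"] assms by simp
  then show ?thesis
    by (simp add: fermi_ball_def)
qed

lemma Lset_eq_shell: "0 < kF \<Longrightarrow> Lset kF k = shell (kF\<^sup>2) k"
  by (simp add: Lset_def shell_def fermi_ball_eq not_less)

lemma lam_eq: "lam kF k p = (hbar kF)\<^sup>2 * of_int (gap k p) / 2"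
  by (simp add: lam_def sqnorm_diff_sqnorm_vdiff)

lemma hbar_sq_sum_inverse_lam:
  assumes "0 < kF" "0 < Npart kF"
  shows "(hbar kF)\<^sup>2 * (\<Sum>p\<in>Lset kF k. 1 / lam kF k p)
    = 2 * (\<Sum>p\<in>shell (kF\<^sup>2) k. 1 / real (nat (gap k p)))"
proof -
  have "(hbar kF)\<^sup>2 = 1 / real (Npart kF)"
    using assms(2) by (simp add: hbar_def power_divide)
  moreover have "real (nat (gap k p)) = of_int (gap k p)" if "p \<in> shell (kF\<^sup>2) k" for p
    using gap_pos[OF that] by simp
  ultimately show ?thesis
    using assms by (simp add: Lset_eq_shell lam_eq sum_distrib_left)
qed

lemma sum_inverse_gap_le:
  assumes "1 \<le> M"
  shows "(\<Sum>p\<in>shell Q k. 1 / real (nat (gap k p))) \<le> 28 * ln (real M) + real (card (shell Q k)) / real M"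
proof (rule sum_inverse_le_ln)
  show "1 \<le> nat (gap k p)" if "p \<in> shell Q k" for p
    using gap_pos[OF that] by simp
  show "real (card {p \<in> shell Q k. nat (gap k p) \<le> d}) \<le> 28 * real d" if "1 \<le> d" for d
    using card_shell_gap_le[OF that, of Q k] by (simp add: nat_le_iff)
qed (use assms finite_shell in auto)

theorem propositionA1:
  shows "\<exists>C>0. \<forall>kF k. admissible_kF kF \<and> Npart kF \<ge> 2 \<longrightarrow>
           (hbar kF)^2 * (\<Sum>p\<in>Lset kF k. 1 / lam kF k p) \<le> C * ln (real (Npart kF))"
proof (intro exI[of _ 60] conjI allI impI)
  fix kF :: real and k :: "int \<times> int"
  assume "admissible_kF kF \<and> 2 \<le> Npart kF"
  then have "0 < kF" and N: "2 \<le> Npart kF"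
    by (auto simp: admissible_kF_def)
  let ?S = "shell (kF\<^sup>2) k" and ?N = "real (Npart kF)"
  define ratio where "ratio = real (card ?S) / ?N"
  have "card ?S \<le> Npart kF"
    using card_shell_le by (simp add: Npart_def fermi_ball_eq[OF \<open>0 < kF\<close>])
  then have "ratio \<le> 1"
    using N by (simp add: ratio_def)
  moreover have "2 / 3 \<le> ln ?N"
    using ln2_ge_two_thirds N by (simp add: ln_le_cancel_iff order_trans)
  ultimately have "2 * (28 * ln ?N + ratio) \<le> 60 * ln ?N"
    by (simp add: algebra_simps)
  moreover have "(hbar kF)\<^sup>2 * (\<Sum>p\<in>Lset kF k. 1 / lam kF k p) \<le> 2 * (28 * ln ?N + ratio)"
    using hbar_sq_sum_inverse_lam[OF \<open>0 < kF\<close>, of k] N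
      sum_inverse_gap_le[where M = "Npart kF" and Q = "kF\<^sup>2" and k = k]
    by (simp add: ratio_def)
  ultimately show "(hbar kF)\<^sup>2 * (\<Sum>p\<in>Lset kF k. 1 / lam kF k p) \<le> 60 * ln ?N"
    by (rule order_trans[rotated])
qed simp

end
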